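(* Assume $d(\eta,\cdot)$ attains its minimum over $\mathcal G$ at $g^*=g^{(\theta^* )}$ for some $\theta^*\in\mathbb{R}^m$, and let $g^{bf}$ be the maximum-entropy element of $P$. Then $$d(\eta,g^{bf})-d(\eta,g^* )\le 2\,\epsilon\cdot|\theta^*|\le 2\|\epsilon\|_\infty\|\theta^*\|_1 .$$ If moreover $g^{bf}\in\mathcal G$, the left-hand side equals $d(g^*,g^{bf})$, so $d(g^*,g^{bf})\le 2\epsilon\cdot|\theta^*|=O(\|\epsilon\|_\infty)$.
   Context: Standard setup. Let $n\ge1$, $k\ge2$, $p\ge1$ be integers and $m=p+k$. There are $n$ data points $x_1,\dots,x_n$ and $p$ rules $h^{(1)},\dots,h^{(p)}$, each a map from $\{x_1,\dots,x_n\}$ to $\{1,\dots,k\}\cup\{?\}$, where "?" means abstain. Let $n_j\ge1$ be the number of indices $i$ with $h^{(j)}(x_i)\neq ?$. $\Delta_k$ denotes the probability simplex in $\mathbb{R}^k$; an element $z\in\Delta_k^n\subset\mathbb{R}^{nk}$ is written $z=(z_1,\dots,z_n)$ with $z_i=(z_{i1},\dots,z_{ik})\in\Delta_k$. For $j\le p$ let $h^{(j)}\in\{0,1\}^{nk}$ also denote the vector with $h^{(j)}_{i\ell}=1$ iff $h^{(j)}(x_i)=\ell$; for $\ell\le k$ let $\vec e^{\,n}_\ell\in\{0,1\}^{nk}$ have entries $(\vec e^{\,n}_\ell)_{i\ell'}=\mathbf 1(\ell'=\ell)$. The matrix $A\in\mathbb{R}^{m\times nk}$ has rows $a^{(j)}=h^{(j)}/n_j$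 for $1\le j\le p$ and $a^{(p+\ell)}=\vec e^{\,n}_\ell/n$ for $1\le\ell\le k$. For $\theta\in\mathbb{R}^m$ put $a^{(\theta)}=A^\top\theta\in\mathbb{R}^{nk}$ (entries $a^{(\theta)}_{i\ell}$) and define $g^{(\theta)}\in\Delta_k^n$ by $g^{(\theta)}_{i\ell}=\exp(a^{(\theta)}_{i\ell})/\sum_{\ell'=1}^k\exp(a^{(\theta)}_{i\ell'})$; let $\mathcal G=\{g^{(\theta)}:\theta\in\mathbb{R}^m\}$. A fixed "true labeling" $\eta\in\Delta_k^n$ is given and $b^*:=A\eta\in\mathbb{R}^m$. Given $b\in\mathbb{R}^m$ and $\epsilon\in\mathbb{R}^m$ with $\epsilon\ge0$ and $b-\epsilon\le b^*\le b+\epsilon$ (entrywise), let $P=\{z\in\Delta_k^n:\ b-\epsilon\le Az\le b+\epsilon\}$ (entrywise). The maximum-entropy element of $P$ is the unique minimizer of $\sum_{i,\ell}z_{i\ell}\log z_{i\ell}$ over $P$ (with $0\log0=0$). For $\mu,\nu\in\Delta_k^n$, $d(\mu,\nu)=\sum_{i=1}^n\mathrm{KL}(\mu_i\|\nu_i)=\sum_{i,\ell}\mu_{i\ell}\log(\mu_{i\ell}/\nu_{i\ell})$, with $0\log(0/x)=0$. $|\theta|$ is the entrywise absolute value. *)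

theory Defs
  imports "HOL-Analysis.Analysis"
begin

(* Indexing conventions (1-based, as in the paper):
   data points i \<in> {1..n}, labels l \<in> {1..k}, rules j \<in> {1..p},
   rows of A indexed by j \<in> {1..p+k}.
   A rule h j :: nat \<Rightarrow> nat option; h j i = None means abstain ("?"),
   h j i = Some l means label l.
   Elements of \<Delta>_k^n are functions z :: nat \<Rightarrow> nat \<Rightarrow> real, z i l = z_{il}. *)

definition nrule :: "nat \<Rightarrow> (nat \<Rightarrow> nat \<Rightarrow> nat option) \<Rightarrow> nat \<Rightarrow> nat" where
  "nrule n h j = card {i \<in> {1..n}. h j i \<noteq> None}"

definition Amat :: "nat \<Rightarrow> nat \<Rightarrow> (nat \<Rightarrow> nat \<Rightarrow> nat option) \<Rightarrow> nat \<Rightarrow> nat \<Rightarrow> nat \<Rightarrow> real" where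
  "Amat n p h j i l =
     (if j \<le> p then (if h j i = Some l then 1 else 0) / real (nrule n h j)
      else (if l = j - p then 1 else 0) / real n)"

definition Aop :: "nat \<Rightarrow> nat \<Rightarrow> nat \<Rightarrow> (nat \<Rightarrow> nat \<Rightarrow> nat option)
                    \<Rightarrow> (nat \<Rightarrow> nat \<Rightarrow> real) \<Rightarrow> nat \<Rightarrow> real" where
  "Aop n k p h z j = (\<Sum>i=1..n. \<Sum>l=1..k. Amat n p h j i l * z i l)"

definition atheta :: "nat \<Rightarrow> nat \<Rightarrow> nat \<Rightarrow> (nat \<Rightarrow> nat \<Rightarrow> nat option)
                    \<Rightarrow> (nat \<Rightarrow> real) \<Rightarrow> nat \<Rightarrow> nat \<Rightarrow> real" where
  "atheta n k p h \<theta> i l = (\<Sum>j=1..p+k. Amat n p h j i l * \<theta> j)"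

definition gtheta :: "nat \<Rightarrow> nat \<Rightarrow> nat \<Rightarrow> (nat \<Rightarrow> nat \<Rightarrow> nat option)
                    \<Rightarrow> (nat \<Rightarrow> real) \<Rightarrow> nat \<Rightarrow> nat \<Rightarrow> real" where
  "gtheta n k p h \<theta> i l =
     exp (atheta n k p h \<theta> i l) / (\<Sum>l'=1..k. exp (atheta n k p h \<theta> i l'))"

definition simplex_prod :: "nat \<Rightarrow> nat \<Rightarrow> (nat \<Rightarrow> nat \<Rightarrow> real) \<Rightarrow> bool" where
  "simplex_prod n k z \<longleftrightarrow>
     (\<forall>i\<in>{1..n}. (\<forall>l\<in>{1..k}. 0 \<le> z i l) \<and> (\<Sum>l=1..k. z i l) = 1)"

(* membership in the family \<G>, compared on the index domain *)
definition in_G :: "nat \<Rightarrow> nat \<Rightarrow> nat \<Rightarrow> (nat \<Rightarrow> nat \<Rightarrow> nat option)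
                    \<Rightarrow> (nat \<Rightarrow> nat \<Rightarrow> real) \<Rightarrow> bool" where
  "in_G n k p h z \<longleftrightarrow> (\<exists>\<theta>. \<forall>i\<in>{1..n}. \<forall>l\<in>{1..k}. z i l = gtheta n k p h \<theta> i l)"

definition polyP :: "nat \<Rightarrow> nat \<Rightarrow> nat \<Rightarrow> (nat \<Rightarrow> nat \<Rightarrow> nat option)
                    \<Rightarrow> (nat \<Rightarrow> real) \<Rightarrow> (nat \<Rightarrow> real) \<Rightarrow> (nat \<Rightarrow> nat \<Rightarrow> real) set" where
  "polyP n k p h b \<epsilon> =
     {z. simplex_prod n k z \<and>
         (\<forall>j\<in>{1..p+k}. b j - \<epsilon> j \<le> Aop n k p h z j \<and> Aop n k p h z j \<le> b j + \<epsilon> j)}"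

definition negent :: "nat \<Rightarrow> nat \<Rightarrow> (nat \<Rightarrow> nat \<Rightarrow> real) \<Rightarrow> real" where
  "negent n k z = (\<Sum>i=1..n. \<Sum>l=1..k. if z i l = 0 then 0 else z i l * ln (z i l))"

definition is_maxent :: "nat \<Rightarrow> nat \<Rightarrow> (nat \<Rightarrow> nat \<Rightarrow> real) set \<Rightarrow> (nat \<Rightarrow> nat \<Rightarrow> real) \<Rightarrow> bool" where
  "is_maxent n k S z \<longleftrightarrow> z \<in> S \<and> (\<forall>w\<in>S. negent n k z \<le> negent n k w)"

definition KLd :: "nat \<Rightarrow> nat \<Rightarrow> (nat \<Rightarrow> nat \<Rightarrow> real) \<Rightarrow> (nat \<Rightarrow> nat \<Rightarrow> real) \<Rightarrow> real" where
  "KLd n k \<mu> \<nu> = (\<Sum>i=1..n. \<Sum>l=1..k. if \<mu> i l = 0 then 0 else \<mu> i l * ln (\<mu> i l / \<nu> i l))"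

end

theory Submission
  imports Defs
begin

(* The maximum-entropy point gbf of P satisfies the first-order condition of entropy
   minimisation in the direction of \<eta> \<in> P: \<eta> is supported where gbf is, and
   \<Sum> gbf ln gbf \<le> \<Sum> \<eta> ln gbf.  With Gibbs' inequality \<Sum> gbf ln g* \<le> \<Sum> gbf ln gbf this gives
     d(\<eta>, gbf) - d(\<eta>, g* ) \<le> \<Sum> (\<eta> - gbf) ln g* = \<theta>* \<cdot> (A \<eta> - A gbf),
   because ln g* is A\<^sup>T \<theta>* up to a constant in each row; and A \<eta>, A gbf both lie in [b - \<epsilon>, b + \<epsilon>].
   If gbf = g(\<theta>), then d(\<eta>, gbf) - d(\<eta>, g* ) and d(g*, gbf) both equal (\<theta>* - \<theta>) \<cdot> A z plus the
   same log-partition terms, with z = \<eta> resp. z = g*.  They agree because A g* = A \<eta>: the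
   gradient of \<theta> \<mapsto> d(\<eta>, g(\<theta>)) vanishes at its minimiser \<theta>*. *)

lemma gibbs_term_le:
  fixes x y :: real
  assumes "0 \<le> x" "0 < y"
  shows "x * ln y + x - y \<le> x * ln x"
proof (cases "x = 0")
  case False
  then have x: "0 < x" using assms by simp
  have "ln (y / x) \<le> y / x - 1" by (rule ln_le_minus_one) (use x assms in simp)
  then have "x * (ln y - ln x) \<le> x * (y / x - 1)" using x assms by (simp add: ln_div)
  also have "\<dots> = y - x" using x by (simp add: field_simps)
  finally show ?thesis by (simp add: algebra_simps)
qed (use assms in simp)

lemma gibbs_inequality:
  fixes x y :: "'a \<Rightarrow> real"
  assumes "\<forall>c\<in>C. 0 \<le> x c \<and> 0 < y c" and "sum x C = sum y C"
  shows "(\<Sum>c\<in>C. x c * ln (y c)) \<le> (\<Sum>c\<in>C. x c * ln (x c))"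
proof -
  have "(\<Sum>c\<in>C. x c * ln (y c)) = (\<Sum>c\<in>C. x c * ln (y c) + x c - y c)"
    using assms(2) by (simp add: sum.distrib sum_subtractf)
  also have "\<dots> \<le> (\<Sum>c\<in>C. x c * ln (x c))"
    using assms(1) by (intro sum_mono gibbs_term_le) auto
  finally show ?thesis .
qed

lemma entropy_directional_derivative_nonneg:
  fixes g e :: "'a \<Rightarrow> real" and t :: real
  defines "z \<equiv> \<lambda>c. (1 - t) * g c + t * e c"
  assumes nonneg: "\<forall>c\<in>C. 0 \<le> g c \<and> 0 \<le> e c" and mass: "sum g C = sum e C"
    and t: "0 < t" "t < 1"
    and opt: "(\<Sum>c\<in>C. g c * ln (g c)) \<le> (\<Sum>c\<in>C. z c * ln (z c))"
  shows "0 \<le> (\<Sum>c\<in>C. (e c - g c) * ln (z c))"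
proof -
  have step: "z c * ln (z c) - g c * ln (g c) \<le> t * ((e c - g c) * ln (z c)) + t * (e c - g c)"
    if c: "c \<in> C" for c
  proof (cases "z c = 0")
    case True
    with nonneg c t have "g c = 0" "e c = 0"
      unfolding z_def by (smt (verit) mult_nonneg_nonneg mult_pos_pos)+
    with True show ?thesis by simp
  next
    case False
    then have "0 < z c" using nonneg c t unfolding z_def by (simp add: order_less_le)
    then have "g c * ln (z c) + g c - z c \<le> g c * ln (g c)"
      using nonneg c by (intro gibbs_term_le) auto
    then show ?thesis unfolding z_def by (simp add: algebra_simps)
  qed
  have "0 \<le> (\<Sum>c\<in>C. z c * ln (z c) - g c * ln (g c))"
    using opt by (simp add: sum_subtractf)
  also have "\<dots> \<le> (\<Sum>c\<in>C. t * ((e c - g c) * ln (z c)) + t * (e c - g c))"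
    using step by (rule sum_mono)
  also have "\<dots> = t * (\<Sum>c\<in>C. (e c - g c) * ln (z c))"
    using mass by (simp add: sum.distrib sum_subtractf sum_distrib_left[symmetric])
  finally show ?thesis using t by (simp add: zero_le_mult_iff)
qed

lemma coefficient_of_ln_eq_0:
  fixes A :: "real \<Rightarrow> real"
  assumes "(A \<longlongrightarrow> a) (at_right 0)" and "0 \<le> c"
    and "eventually (\<lambda>t. 0 \<le> A t + c * ln t) (at_right 0)"
  shows "c = 0"
proof (rule ccontr)
  assume "c \<noteq> 0"
  with assms(2) have "0 < c" by simp
  then have "LIM t at_right 0. c * ln t :> at_bot"
    by (rule filterlim_tendsto_pos_mult_at_bot[OF tendsto_const _ ln_at_0])
  then have "LIM t at_right 0. A t + c * ln t :> at_bot"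
    by (rule filterlim_tendsto_add_at_bot_iff[OF assms(1), THEN iffD2])
  then have "eventually (\<lambda>t. A t + c * ln t \<le> -1) (at_right 0)"
    by (simp add: filterlim_at_bot)
  with assms(3) have "eventually (\<lambda>t. False) (at_right (0::real))"
    by eventually_elim simp
  then show False by simp
qed

lemma support_and_variation_of_directional_bound:
  fixes g e :: "'a \<Rightarrow> real"
  assumes C: "finite C" and nonneg: "\<forall>c\<in>C. 0 \<le> g c \<and> 0 \<le> e c"
    and dir: "\<And>t. 0 < t \<Longrightarrow> t < 1 \<Longrightarrow>
                0 \<le> (\<Sum>c\<in>C. (e c - g c) * ln ((1 - t) * g c + t * e c))"
  shows "\<forall>c\<in>C. 0 < e c \<longrightarrow> 0 < g c" and "0 \<le> (\<Sum>c\<in>C. (e c - g c) * ln (g c))"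
proof -
  define F where "F t = (\<Sum>c\<in>C. (e c - g c) * ln ((1 - t) * g c + t * e c))" for t
  define A where "A t = (\<Sum>c\<in>C. if g c = 0 then 0 else (e c - g c) * ln ((1 - t) * g c + t * e c))"
    for t
  define m where "m = (\<Sum>c\<in>C. if g c = 0 then e c else 0)"
  define r where "r = (\<Sum>c\<in>C. if g c = 0 then e c * ln (e c) else 0)"
  have F_split: "F t = A t + m * ln t + r" if "0 < t" for t
  proof -
    have "(e c - g c) * ln ((1 - t) * g c + t * e c)
        = (if g c = 0 then 0 else (e c - g c) * ln ((1 - t) * g c + t * e c))
          + (if g c = 0 then e c else 0) * ln t + (if g c = 0 then e c * ln (e c) else 0)" for c
      using that by (cases "e c = 0") (auto simp: ln_mult algebra_simps)
    then show ?thesis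
      unfolding F_def A_def m_def r_def sum_distrib_right sum.distrib[symmetric]
      by (rule sum.cong[OF refl])
  qed
  have A_lim: "(A \<longlongrightarrow> (\<Sum>c\<in>C. (e c - g c) * ln (g c))) (at_right 0)"
  proof -
    have "((\<lambda>t. if g c = 0 then 0 else (e c - g c) * ln ((1 - t) * g c + t * e c))
           \<longlongrightarrow> (e c - g c) * ln (g c)) (at_right 0)" if "c \<in> C" for c
    proof (cases "g c = 0")
      case False
      with nonneg that have "0 < g c" by (simp add: order_less_le)
      have "((\<lambda>t. (1 - t) * g c + t * e c) \<longlongrightarrow> (1 - 0) * g c + 0 * e c) (at_right 0)"
        by (intro tendsto_intros)
      with \<open>0 < g c\<close> have "((\<lambda>t. ln ((1 - t) * g c + t * e c)) \<longlongrightarrow> ln (g c)) (at_right 0)"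
        by (intro tendsto_ln) auto
      with False show ?thesis by (simp add: tendsto_mult_left)
    qed simp
    then show ?thesis unfolding A_def by (rule tendsto_sum)
  qed
  have small: "eventually (\<lambda>t. 0 < t \<and> t < 1) (at_right (0::real))"
    by (auto simp: eventually_at_right_field intro: exI[of _ 1])
  \<comment> \<open>Mass of \<open>e\<close> off the support of \<open>g\<close> contributes \<open>m ln t \<longrightarrow> -\<infinity>\<close> to the derivative.\<close>
  have "m = 0"
  proof (rule coefficient_of_ln_eq_0)
    show "((\<lambda>t. A t + r) \<longlongrightarrow> (\<Sum>c\<in>C. (e c - g c) * ln (g c)) + r) (at_right 0)"
      by (intro tendsto_add A_lim tendsto_const)
    show "0 \<le> m" unfolding m_def using nonneg by (auto intro: sum_nonneg)
    show "eventually (\<lambda>t. 0 \<le> A t + r + m * ln t) (at_right 0)"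
      using small by eventually_elim (use dir F_split in \<open>simp add: F_def algebra_simps\<close>)
  qed
  then have "\<forall>c\<in>C. (if g c = 0 then e c else 0) = 0"
    unfolding m_def using nonneg by (subst (asm) sum_nonneg_eq_0_iff[OF C]) auto
  then have off_support: "\<forall>c\<in>C. g c = 0 \<longrightarrow> e c = 0"
    by auto
  then show "\<forall>c\<in>C. 0 < e c \<longrightarrow> 0 < g c"
    using nonneg by (auto simp: order_less_le)
  have "r = 0" unfolding r_def using off_support by (auto intro: sum.neutral)
  have "(F \<longlongrightarrow> (\<Sum>c\<in>C. (e c - g c) * ln (g c))) (at_right 0)"
  proof (rule Lim_transform_eventually[OF A_lim])
    show "eventually (\<lambda>t. A t = F t) (at_right 0)"
      using small by eventually_elim (simp add: F_split \<open>m = 0\<close> \<open>r = 0\<close>)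
  qed
  then show "0 \<le> (\<Sum>c\<in>C. (e c - g c) * ln (g c))"
    by (rule tendsto_lowerbound) (use small dir in \<open>auto simp: F_def elim: eventually_mono\<close>)
qed

lemma entropy_minimizer_variational_inequality:
  fixes g e :: "'a \<Rightarrow> real"
  assumes C: "finite C" and nonneg: "\<forall>c\<in>C. 0 \<le> g c \<and> 0 \<le> e c"
    and mass: "sum g C = sum e C"
    and opt: "\<And>t. 0 < t \<Longrightarrow> t < 1 \<Longrightarrow> (\<Sum>c\<in>C. g c * ln (g c))
                \<le> (\<Sum>c\<in>C. ((1 - t) * g c + t * e c) * ln ((1 - t) * g c + t * e c))"
  shows "\<forall>c\<in>C. 0 < e c \<longrightarrow> 0 < g c" and "(\<Sum>c\<in>C. g c * ln (g c)) \<le> (\<Sum>c\<in>C. e c * ln (g c))"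
proof -
  have dir: "0 \<le> (\<Sum>c\<in>C. (e c - g c) * ln ((1 - t) * g c + t * e c))" if "0 < t" "t < 1" for t
    using entropy_directional_derivative_nonneg[OF nonneg mass that opt[OF that]] .
  show "\<forall>c\<in>C. 0 < e c \<longrightarrow> 0 < g c"
    by (rule support_and_variation_of_directional_bound(1)[OF C nonneg dir])
  have "0 \<le> (\<Sum>c\<in>C. (e c - g c) * ln (g c))"
    by (rule support_and_variation_of_directional_bound(2)[OF C nonneg dir])
  then show "(\<Sum>c\<in>C. g c * ln (g c)) \<le> (\<Sum>c\<in>C. e c * ln (g c))"
    by (simp add: left_diff_distrib sum_subtractf)
qed

definition log_partition ::
    "nat \<Rightarrow> nat \<Rightarrow> nat \<Rightarrow> (nat \<Rightarrow> nat \<Rightarrow> nat option) \<Rightarrow> (nat \<Rightarrow> real) \<Rightarrow> nat \<Rightarrow> real" where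
  "log_partition n k p h \<theta> i = ln (\<Sum>l=1..k. exp (atheta n k p h \<theta> i l))"

lemma sum_exp_atheta_pos: "1 \<le> k \<Longrightarrow> 0 < (\<Sum>l=1..k. exp (atheta n k p h \<theta> i l))"
  by (intro sum_pos) auto

lemma gtheta_pos: "1 \<le> k \<Longrightarrow> 0 < gtheta n k p h \<theta> i l"
  unfolding gtheta_def by (rule divide_pos_pos[OF exp_gt_zero sum_exp_atheta_pos])

lemma ln_gtheta:
  "1 \<le> k \<Longrightarrow> ln (gtheta n k p h \<theta> i l) = atheta n k p h \<theta> i l - log_partition n k p h \<theta> i"
  unfolding gtheta_def log_partition_def using sum_exp_atheta_pos[of k n p h \<theta> i] by (simp add: ln_div)

lemma gtheta_row_sum: "1 \<le> k \<Longrightarrow> (\<Sum>l=1..k. gtheta n k p h \<theta> i l) = 1"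
  unfolding gtheta_def using sum_exp_atheta_pos[of k n p h \<theta> i]
  by (simp add: sum_divide_distrib[symmetric])

lemma atheta_add_scaled:
  "atheta n k p h (\<lambda>j. \<theta> j + s * v j) i l = atheta n k p h \<theta> i l + s * atheta n k p h v i l"
  unfolding atheta_def by (simp add: sum.distrib sum_distrib_left distrib_left mult.left_commute)

lemma sum_atheta_mult_eq_sum_Aop:
  "(\<Sum>i=1..n. \<Sum>l=1..k. atheta n k p h \<theta> i l * z i l) = (\<Sum>j=1..p+k. \<theta> j * Aop n k p h z j)"
proof -
  have "(\<Sum>i=1..n. \<Sum>l=1..k. atheta n k p h \<theta> i l * z i l)
      = (\<Sum>i=1..n. \<Sum>l=1..k. \<Sum>j=1..p+k. \<theta> j * (Amat n p h j i l * z i l))"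
    unfolding atheta_def sum_distrib_right by (simp add: mult_ac)
  also have "\<dots> = (\<Sum>i=1..n. \<Sum>j=1..p+k. \<Sum>l=1..k. \<theta> j * (Amat n p h j i l * z i l))"
    by (rule sum.cong[OF refl], rule sum.swap)
  also have "\<dots> = (\<Sum>j=1..p+k. \<Sum>i=1..n. \<Sum>l=1..k. \<theta> j * (Amat n p h j i l * z i l))"
    by (rule sum.swap)
  also have "\<dots> = (\<Sum>j=1..p+k. \<theta> j * Aop n k p h z j)"
    by (simp add: Aop_def sum_distrib_left)
  finally show ?thesis .
qed

lemma cross_entropy_gtheta:
  assumes "1 \<le> k" and rows: "\<forall>i\<in>{1..n}. (\<Sum>l=1..k. z i l) = 1"
  shows "(\<Sum>i=1..n. \<Sum>l=1..k. z i l * ln (gtheta n k p h \<theta> i l))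
       = (\<Sum>j=1..p+k. \<theta> j * Aop n k p h z j) - (\<Sum>i=1..n. log_partition n k p h \<theta> i)"
proof -
  have "(\<Sum>l=1..k. z i l * ln (gtheta n k p h \<theta> i l))
      = (\<Sum>l=1..k. atheta n k p h \<theta> i l * z i l) - log_partition n k p h \<theta> i"
    if "i \<in> {1..n}" for i
    using rows that
    by (simp add: ln_gtheta[OF assms(1)] right_diff_distrib sum_subtractf
                  sum_distrib_right[symmetric] mult.commute)
  then have "(\<Sum>i=1..n. \<Sum>l=1..k. z i l * ln (gtheta n k p h \<theta> i l))
      = (\<Sum>i=1..n. (\<Sum>l=1..k. atheta n k p h \<theta> i l * z i l) - log_partition n k p h \<theta> i)"
    by (rule sum.cong[OF refl])
  then show ?thesis
    by (simp only: sum_subtractf sum_atheta_mult_eq_sum_Aop)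
qed

\<comment> \<open>\<open>ln 0 = 0\<close> in Isabelle, so the \<open>0 log 0 = 0\<close> case split of the definition is redundant.\<close>
lemma negent_eq_sum_mult_ln: "negent n k z = (\<Sum>i=1..n. \<Sum>l=1..k. z i l * ln (z i l))"
  unfolding negent_def by (intro sum.cong refl) simp

lemma KLd_eq_negent_minus_cross_entropy:
  assumes "\<forall>i\<in>{1..n}. \<forall>l\<in>{1..k}. 0 \<le> \<mu> i l \<and> (0 < \<mu> i l \<longrightarrow> 0 < \<nu> i l)"
  shows "KLd n k \<mu> \<nu> = negent n k \<mu> - (\<Sum>i=1..n. \<Sum>l=1..k. \<mu> i l * ln (\<nu> i l))"
proof -
  have "(if \<mu> i l = 0 then 0 else \<mu> i l * ln (\<mu> i l / \<nu> i l))
      = \<mu> i l * ln (\<mu> i l) - \<mu> i l * ln (\<nu> i l)" if "i \<in> {1..n}" "l \<in> {1..k}" for i l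
    using assms that by (cases "\<mu> i l = 0") (auto simp: ln_div right_diff_distrib order_less_le)
  then show ?thesis
    unfolding KLd_def negent_eq_sum_mult_ln by (simp add: sum_subtractf)
qed

lemma KLd_gtheta:
  assumes "1 \<le> k" and z: "simplex_prod n k z"
  shows "KLd n k z (gtheta n k p h \<theta>)
       = negent n k z - (\<Sum>j=1..p+k. \<theta> j * Aop n k p h z j) + (\<Sum>i=1..n. log_partition n k p h \<theta> i)"
proof -
  have "KLd n k z (gtheta n k p h \<theta>)
      = negent n k z - (\<Sum>i=1..n. \<Sum>l=1..k. z i l * ln (gtheta n k p h \<theta> i l))"
    using z gtheta_pos[OF assms(1)] by (intro KLd_eq_negent_minus_cross_entropy) (simp add: simplex_prod_def)
  also have "\<dots> = negent n k z - (\<Sum>j=1..p+k. \<theta> j * Aop n k p h z j) + (\<Sum>i=1..n. log_partition n k p h \<theta> i)"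
    using z unfolding simplex_prod_def by (subst cross_entropy_gtheta[OF assms(1)]) auto
  finally show ?thesis .
qed

lemma sum_log_partition_has_derivative:
  assumes k: "1 \<le> k"
  shows "((\<lambda>s. \<Sum>i=1..n. log_partition n k p h (\<lambda>j. \<theta> j + s * v j) i) has_real_derivative
           (\<Sum>j=1..p+k. v j * Aop n k p h (gtheta n k p h \<theta>) j)) (at 0)"
proof -
  define a where "a = atheta n k p h \<theta>"
  define c where "c = atheta n k p h v"
  have Z: "0 < (\<Sum>l=1..k. exp (a i l))" for i
    unfolding a_def by (rule sum_exp_atheta_pos[OF k])
  have "((\<lambda>s. \<Sum>i=1..n. ln (\<Sum>l=1..k. exp (a i l + s * c i l))) has_real_derivative
          (\<Sum>i=1..n. (\<Sum>l=1..k. exp (a i l) * c i l) / (\<Sum>l=1..k. exp (a i l)))) (at 0)"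
    using Z by (auto intro!: derivative_eq_intros)
  moreover have "(\<Sum>i=1..n. (\<Sum>l=1..k. exp (a i l) * c i l) / (\<Sum>l=1..k. exp (a i l)))
      = (\<Sum>i=1..n. \<Sum>l=1..k. c i l * gtheta n k p h \<theta> i l)"
    unfolding gtheta_def a_def by (intro sum.cong refl) (simp add: sum_divide_distrib mult.commute)
  ultimately show ?thesis
    unfolding log_partition_def atheta_add_scaled a_def c_def sum_atheta_mult_eq_sum_Aop by simp
qed

lemma Aop_gtheta_eq_of_KLd_minimizer:
  assumes k: "1 \<le> k" and \<eta>: "simplex_prod n k \<eta>"
    and min: "\<forall>\<theta>. KLd n k \<eta> (gtheta n k p h \<theta>s) \<le> KLd n k \<eta> (gtheta n k p h \<theta>)"
    and j: "j \<in> {1..p+k}"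
  shows "Aop n k p h (gtheta n k p h \<theta>s) j = Aop n k p h \<eta> j"
proof -
  define v :: "nat \<Rightarrow> real" where "v j' = (if j' = j then 1 else 0)" for j'
  have pick: "(\<Sum>j'=1..p+k. v j' * x j') = x j" for x :: "nat \<Rightarrow> real"
  proof -
    have "(\<Sum>j'=1..p+k. v j' * x j') = (\<Sum>j'=1..p+k. if j' = j then x j' else 0)"
      unfolding v_def by (intro sum.cong) auto
    with j show ?thesis by simp
  qed
  define E where "E s = KLd n k \<eta> (gtheta n k p h (\<lambda>j'. \<theta>s j' + s * v j'))" for s
  define K where "K = negent n k \<eta> - (\<Sum>j'=1..p+k. \<theta>s j' * Aop n k p h \<eta> j')"
  have E_eq: "E = (\<lambda>s. K - s * Aop n k p h \<eta> j
                    + (\<Sum>i=1..n. log_partition n k p h (\<lambda>j'. \<theta>s j' + s * v j') i))"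
  proof
    fix s
    have "(\<Sum>j'=1..p+k. (\<theta>s j' + s * v j') * Aop n k p h \<eta> j')
        = (\<Sum>j'=1..p+k. \<theta>s j' * Aop n k p h \<eta> j') + s * Aop n k p h \<eta> j"
      using pick[of "Aop n k p h \<eta>"]
      by (simp add: distrib_right sum.distrib mult.assoc flip: sum_distrib_left)
    then show "E s = K - s * Aop n k p h \<eta> j
                    + (\<Sum>i=1..n. log_partition n k p h (\<lambda>j'. \<theta>s j' + s * v j') i)"
      unfolding E_def K_def KLd_gtheta[OF k \<eta>] by simp
  qed
  have "(E has_real_derivative
          - Aop n k p h \<eta> j + Aop n k p h (gtheta n k p h \<theta>s) j) (at 0)"
    unfolding E_eq pick[symmetric]
    by (intro DERIV_add sum_log_partition_has_derivative[OF k] derivative_eq_intros) auto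
  moreover have "E 0 \<le> E s" for s
    using min unfolding E_def by simp
  ultimately have "- Aop n k p h \<eta> j + Aop n k p h (gtheta n k p h \<theta>s) j = 0"
    by (metis DERIV_local_min zero_less_one)
  then show ?thesis by simp
qed

lemma Aop_convex_combination:
  "Aop n k p h (\<lambda>i l. (1 - t) * x i l + t * y i l) j = (1 - t) * Aop n k p h x j + t * Aop n k p h y j"
  unfolding Aop_def by (simp add: sum.distrib sum_distrib_left distrib_left mult.left_commute)

lemma polyP_convex:
  assumes x: "x \<in> polyP n k p h b \<epsilon>" and y: "y \<in> polyP n k p h b \<epsilon>" and t: "0 \<le> t" "t \<le> 1"
  shows "(\<lambda>i l. (1 - t) * x i l + t * y i l) \<in> polyP n k p h b \<epsilon>"
proof -
  have between: "lo \<le> (1 - t) * u + t * w \<and> (1 - t) * u + t * w \<le> hi"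
    if "lo \<le> u" "u \<le> hi" "lo \<le> w" "w \<le> hi" for lo hi u w :: real
  proof -
    have "(1 - t) * lo \<le> (1 - t) * u" "t * lo \<le> t * w" "(1 - t) * u \<le> (1 - t) * hi" "t * w \<le> t * hi"
      using that t by (auto intro: mult_left_mono)
    then show ?thesis by (simp add: algebra_simps)
  qed
  let ?z = "\<lambda>i l. (1 - t) * x i l + t * y i l"
  have sx: "simplex_prod n k x" and sy: "simplex_prod n k y"
    using x y by (simp_all add: polyP_def)
  have "simplex_prod n k ?z"
    unfolding simplex_prod_def
  proof (intro ballI conjI)
    fix i l assume "i \<in> {1..n}" "l \<in> {1..k}"
    then show "0 \<le> ?z i l" using sx sy t by (simp add: simplex_prod_def)
  next
    fix i assume "i \<in> {1..n}"
    then show "(\<Sum>l=1..k. ?z i l) = 1"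
      using sx sy by (simp add: simplex_prod_def sum.distrib flip: sum_distrib_left)
  qed
  moreover have "b j - \<epsilon> j \<le> Aop n k p h ?z j \<and> Aop n k p h ?z j \<le> b j + \<epsilon> j"
    if "j \<in> {1..p+k}" for j
    unfolding Aop_convex_combination using x y that by (intro between) (auto simp: polyP_def)
  ultimately show ?thesis by (simp add: polyP_def)
qed

lemma maxent_variational_inequality:
  assumes g: "is_maxent n k (polyP n k p h b \<epsilon>) g" and e: "e \<in> polyP n k p h b \<epsilon>"
  shows "\<forall>i\<in>{1..n}. \<forall>l\<in>{1..k}. 0 < e i l \<longrightarrow> 0 < g i l"
    and "negent n k g \<le> (\<Sum>i=1..n. \<Sum>l=1..k. e i l * ln (g i l))"
proof -
  let ?C = "{1..n} \<times> {1..k}"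
  have gP: "g \<in> polyP n k p h b \<epsilon>" and opt: "\<forall>w\<in>polyP n k p h b \<epsilon>. negent n k g \<le> negent n k w"
    using g unfolding is_maxent_def by auto
  have simplex: "simplex_prod n k g" "simplex_prod n k e"
    using gP e unfolding polyP_def by auto
  have nonneg: "\<forall>c\<in>?C. 0 \<le> case_prod g c \<and> 0 \<le> case_prod e c"
    using simplex unfolding simplex_prod_def by auto
  have mass: "sum (case_prod g) ?C = sum (case_prod e) ?C"
    using simplex unfolding simplex_prod_def sum.cartesian_product[symmetric] by simp
  have "(\<Sum>c\<in>?C. case_prod g c * ln (case_prod g c))
      \<le> (\<Sum>c\<in>?C. ((1 - t) * case_prod g c + t * case_prod e c)
                     * ln ((1 - t) * case_prod g c + t * case_prod e c))"
    if "0 < t" "t < 1" for t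
  proof -
    have "negent n k g \<le> negent n k (\<lambda>i l. (1 - t) * g i l + t * e i l)"
      using opt polyP_convex[OF gP e] that by simp
    then show ?thesis
      unfolding negent_eq_sum_mult_ln sum.cartesian_product by (simp add: case_prod_beta)
  qed
  note variation = entropy_minimizer_variational_inequality[OF _ nonneg mass this]
  show "\<forall>i\<in>{1..n}. \<forall>l\<in>{1..k}. 0 < e i l \<longrightarrow> 0 < g i l"
    using variation(1) by auto
  show "negent n k g \<le> (\<Sum>i=1..n. \<Sum>l=1..k. e i l * ln (g i l))"
    using variation(2) unfolding negent_eq_sum_mult_ln sum.cartesian_product by (simp add: case_prod_beta)
qed

lemma KLd_maxent_excess_le:
  assumes k: "1 \<le> k" and e: "e \<in> polyP n k p h b \<epsilon>" and g: "is_maxent n k (polyP n k p h b \<epsilon>) g"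
  shows "KLd n k e g - KLd n k e (gtheta n k p h \<theta>)
       \<le> (\<Sum>j=1..p+k. \<theta> j * (Aop n k p h e j - Aop n k p h g j))"
proof -
  let ?q = "gtheta n k p h \<theta>" and ?L = "\<Sum>i=1..n. log_partition n k p h \<theta> i"
  have e_simplex: "simplex_prod n k e" and g_simplex: "simplex_prod n k g"
    using e g unfolding polyP_def is_maxent_def by auto
  note support = maxent_variational_inequality(1)[OF g e]
  have "KLd n k e g = negent n k e - (\<Sum>i=1..n. \<Sum>l=1..k. e i l * ln (g i l))"
    using e_simplex support by (intro KLd_eq_negent_minus_cross_entropy) (simp add: simplex_prod_def)
  also have "\<dots> \<le> negent n k e - negent n k g"
    using maxent_variational_inequality(2)[OF g e] by simp
  also have "\<dots> \<le> negent n k e - (\<Sum>i=1..n. \<Sum>l=1..k. g i l * ln (?q i l))"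
  proof -
    have "(\<Sum>l=1..k. g i l * ln (?q i l)) \<le> (\<Sum>l=1..k. g i l * ln (g i l))" if "i \<in> {1..n}" for i
      using g_simplex that gtheta_pos[OF k] gtheta_row_sum[OF k]
      by (intro gibbs_inequality) (auto simp: simplex_prod_def)
    then have "(\<Sum>i=1..n. \<Sum>l=1..k. g i l * ln (?q i l)) \<le> negent n k g"
      unfolding negent_eq_sum_mult_ln by (rule sum_mono)
    then show ?thesis by simp
  qed
  also have "\<dots> = negent n k e - (\<Sum>j=1..p+k. \<theta> j * Aop n k p h g j) + ?L"
    using g_simplex unfolding simplex_prod_def by (subst cross_entropy_gtheta[OF k]) auto
  finally show ?thesis
    unfolding KLd_gtheta[OF k e_simplex] by (simp add: sum_subtractf right_diff_distrib)
qed

lemma sum_mult_diff_le_of_intervals: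
  fixes x y b \<epsilon> \<theta> :: "'a \<Rightarrow> real"
  assumes "\<forall>j\<in>J. b j - \<epsilon> j \<le> x j \<and> x j \<le> b j + \<epsilon> j"
    and "\<forall>j\<in>J. b j - \<epsilon> j \<le> y j \<and> y j \<le> b j + \<epsilon> j"
  shows "(\<Sum>j\<in>J. \<theta> j * (x j - y j)) \<le> 2 * (\<Sum>j\<in>J. \<epsilon> j * \<bar>\<theta> j\<bar>)"
proof -
  have "\<theta> j * (x j - y j) \<le> 2 * (\<epsilon> j * \<bar>\<theta> j\<bar>)" if "j \<in> J" for j
  proof -
    have "b j - \<epsilon> j \<le> x j" "x j \<le> b j + \<epsilon> j" "b j - \<epsilon> j \<le> y j" "y j \<le> b j + \<epsilon> j"
      using assms that by auto
    then have "\<bar>x j - y j\<bar> \<le> 2 * \<epsilon> j" by (auto simp: abs_le_iff)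
    then have "\<bar>\<theta> j\<bar> * \<bar>x j - y j\<bar> \<le> \<bar>\<theta> j\<bar> * (2 * \<epsilon> j)" by (simp add: mult_left_mono)
    moreover have "\<theta> j * (x j - y j) \<le> \<bar>\<theta> j\<bar> * \<bar>x j - y j\<bar>" by (simp add: abs_mult[symmetric])
    ultimately show ?thesis by (simp add: mult_ac)
  qed
  then have "(\<Sum>j\<in>J. \<theta> j * (x j - y j)) \<le> (\<Sum>j\<in>J. 2 * (\<epsilon> j * \<bar>\<theta> j\<bar>))"
    by (rule sum_mono)
  then show ?thesis by (simp add: sum_distrib_left)
qed

lemma sum_mult_abs_le_Max_mult_sum_abs:
  fixes \<epsilon> \<theta> :: "'a \<Rightarrow> real"
  assumes "finite J"
  shows "(\<Sum>j\<in>J. \<epsilon> j * \<bar>\<theta> j\<bar>) \<le> Max ((\<lambda>j. \<bar>\<epsilon> j\<bar>) ` J) * (\<Sum>j\<in>J. \<bar>\<theta> j\<bar>)"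
proof -
  have "\<epsilon> j * \<bar>\<theta> j\<bar> \<le> Max ((\<lambda>j. \<bar>\<epsilon> j\<bar>) ` J) * \<bar>\<theta> j\<bar>" if "j \<in> J" for j
  proof (rule mult_right_mono)
    show "\<epsilon> j \<le> Max ((\<lambda>j. \<bar>\<epsilon> j\<bar>) ` J)"
      using assms that by (meson Max_ge abs_ge_self finite_imageI image_eqI order_trans)
  qed simp
  then show ?thesis by (simp add: sum_mono sum_distrib_left)
qed

lemma KLd_excess_eq_KLd_of_in_G:
  assumes k: "1 \<le> k" and \<eta>: "simplex_prod n k \<eta>"
    and min: "\<forall>\<theta>. KLd n k \<eta> (gtheta n k p h \<theta>s) \<le> KLd n k \<eta> (gtheta n k p h \<theta>)"
    and G: "in_G n k p h g"
  shows "KLd n k \<eta> g - KLd n k \<eta> (gtheta n k p h \<theta>s) = KLd n k (gtheta n k p h \<theta>s) g"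
proof -
  let ?q = "gtheta n k p h \<theta>s"
  obtain \<theta> where g_eq: "\<forall>i\<in>{1..n}. \<forall>l\<in>{1..k}. g i l = gtheta n k p h \<theta> i l"
    using G unfolding in_G_def by blast
  have q_simplex: "simplex_prod n k ?q"
    using gtheta_pos[OF k] gtheta_row_sum[OF k] by (simp add: simplex_prod_def less_imp_le)
  have KLd_g: "KLd n k z g = KLd n k z (gtheta n k p h \<theta>)" for z
    unfolding KLd_def using g_eq by (intro sum.cong refl) auto
  have moments: "(\<Sum>j=1..p+k. c j * Aop n k p h ?q j) = (\<Sum>j=1..p+k. c j * Aop n k p h \<eta> j)" for c
    using Aop_gtheta_eq_of_KLd_minimizer[OF k \<eta> min] by simp
  have "negent n k ?q = (\<Sum>j=1..p+k. \<theta>s j * Aop n k p h ?q j) - (\<Sum>i=1..n. log_partition n k p h \<theta>s i)"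
    unfolding negent_eq_sum_mult_ln
    using q_simplex unfolding simplex_prod_def by (subst cross_entropy_gtheta[OF k]) auto
  then show ?thesis
    unfolding KLd_g KLd_gtheta[OF k \<eta>] KLd_gtheta[OF k q_simplex] moments by simp
qed

theorem theorem4:
  fixes n k p :: nat
    and h :: "nat \<Rightarrow> nat \<Rightarrow> nat option"
    and \<eta> gbf :: "nat \<Rightarrow> nat \<Rightarrow> real"
    and b \<epsilon> \<theta>s :: "nat \<Rightarrow> real"
  assumes hn: "n \<ge> 1" and hk: "k \<ge> 2" and hp: "p \<ge> 1"
    and hrules: "\<forall>j\<in>{1..p}. \<forall>i\<in>{1..n}. \<forall>l. h j i = Some l \<longrightarrow> l \<in> {1..k}"
    and hnj: "\<forall>j\<in>{1..p}. nrule n h j \<ge> 1"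
    and heta: "simplex_prod n k \<eta>"
    and heps: "\<forall>j\<in>{1..p+k}. 0 \<le> \<epsilon> j"
    and hb: "\<forall>j\<in>{1..p+k}. b j - \<epsilon> j \<le> Aop n k p h \<eta> j \<and> Aop n k p h \<eta> j \<le> b j + \<epsilon> j"
    and hmin: "\<forall>\<theta>. KLd n k \<eta> (gtheta n k p h \<theta>s) \<le> KLd n k \<eta> (gtheta n k p h \<theta>)"
    and hbf: "is_maxent n k (polyP n k p h b \<epsilon>) gbf"
  shows "KLd n k \<eta> gbf - KLd n k \<eta> (gtheta n k p h \<theta>s)
           \<le> 2 * (\<Sum>j=1..p+k. \<epsilon> j * \<bar>\<theta>s j\<bar>)
       \<and> 2 * (\<Sum>j=1..p+k. \<epsilon> j * \<bar>\<theta>s j\<bar>)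
           \<le> 2 * Max ((\<lambda>j. \<bar>\<epsilon> j\<bar>) ` {1..p+k}) * (\<Sum>j=1..p+k. \<bar>\<theta>s j\<bar>)
       \<and> (in_G n k p h gbf \<longrightarrow>
            KLd n k \<eta> gbf - KLd n k \<eta> (gtheta n k p h \<theta>s) = KLd n k (gtheta n k p h \<theta>s) gbf
          \<and> KLd n k (gtheta n k p h \<theta>s) gbf \<le> 2 * (\<Sum>j=1..p+k. \<epsilon> j * \<bar>\<theta>s j\<bar>))"
proof -
  have k: "1 \<le> k" using hk by simp
  have \<eta>P: "\<eta> \<in> polyP n k p h b \<epsilon>"
    using heta hb by (simp add: polyP_def)
  have gbf_bounds: "\<forall>j\<in>{1..p+k}. b j - \<epsilon> j \<le> Aop n k p h gbf j \<and> Aop n k p h gbf j \<le> b j + \<epsilon> j"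
    using hbf unfolding is_maxent_def polyP_def by auto
  have excess: "KLd n k \<eta> gbf - KLd n k \<eta> (gtheta n k p h \<theta>s) \<le> 2 * (\<Sum>j=1..p+k. \<epsilon> j * \<bar>\<theta>s j\<bar>)"
    using KLd_maxent_excess_le[OF k \<eta>P hbf, of \<theta>s]
      sum_mult_diff_le_of_intervals[OF hb gbf_bounds, of \<theta>s] by linarith
  moreover have "2 * (\<Sum>j=1..p+k. \<epsilon> j * \<bar>\<theta>s j\<bar>)
           \<le> 2 * Max ((\<lambda>j. \<bar>\<epsilon> j\<bar>) ` {1..p+k}) * (\<Sum>j=1..p+k. \<bar>\<theta>s j\<bar>)"
    using sum_mult_abs_le_Max_mult_sum_abs[of "{1..p+k}" \<epsilon> \<theta>s] by simp
  moreover have "KLd n k \<eta> gbf - KLd n k \<eta> (gtheta n k p h \<theta>s) = KLd n k (gtheta n k p h \<theta>s) gbf"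
    if "in_G n k p h gbf"
    using KLd_excess_eq_KLd_of_in_G[OF k heta hmin that] .
  ultimately show ?thesis by auto
qed

end
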